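(* (a) There exists a constant $c_1$ such that for every $n$ and every configuration of $n$ points in the square $[0,n^{1/2}]^2$, the minimal spanning tree $\hat T_n$ of the complete graph on these points with Euclidean edge lengths satisfies $\mathrm{len}(\hat T_n)\le c_1 n$. (b) For all sufficiently large $n$, if $T_n$ is the MST of $n$ independent uniform points in $[0,n^{1/2}]^2$ (Euclidean complete graph), there exists a spanning tree $T_n''$ on the same points with $\mathrm{len}(T_n'')\le 12c_1 n$ and $n^{-1}|T_n''\setminus T_n|\ge 1/2$.
   Context: Spanning trees are identified with their edge sets; $\mathrm{len}(T)$ is the sum of the Euclidean lengths of its edges; $T''\setminus T$ denotes the edges of $T''$ not in $T$. *)

theory Defs
  imports "HOL-Probability.Probability"
begin

text \<open>Points are indexed by 0..<n (so coincident points are allowed);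
an edge of the complete graph is a pair (i,j) with i < j < n.\<close>

definition cg_edges :: "nat \<Rightarrow> (nat \<times> nat) set" where
  "cg_edges n = {(i,j). i < j \<and> j < n}"

definition graph_connected :: "nat \<Rightarrow> (nat \<times> nat) set \<Rightarrow> bool" where
  "graph_connected n T \<longleftrightarrow>
     (\<forall>i<n. \<forall>j<n. (i, j) \<in> (T \<union> T\<inverse>)\<^sup>*)"

definition spanning_tree :: "nat \<Rightarrow> (nat \<times> nat) set \<Rightarrow> bool" where
  "spanning_tree n T \<longleftrightarrow> T \<subseteq> cg_edges n \<and> graph_connected n T \<and>
     (\<forall>e\<in>T. \<not> graph_connected n (T - {e}))"

definition tree_len :: "(nat \<Rightarrow> real^2) \<Rightarrow> (nat \<times> nat) set \<Rightarrow> real" where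
  "tree_len x T = (\<Sum>(i,j)\<in>T. dist (x i) (x j))"

definition is_MST :: "nat \<Rightarrow> (nat \<Rightarrow> real^2) \<Rightarrow> (nat \<times> nat) set \<Rightarrow> bool" where
  "is_MST n x T \<longleftrightarrow> spanning_tree n T \<and>
     (\<forall>T'. spanning_tree n T' \<longrightarrow> tree_len x T \<le> tree_len x T')"

definition in_square :: "nat \<Rightarrow> (nat \<Rightarrow> real^2) \<Rightarrow> bool" where
  "in_square n x \<longleftrightarrow> (\<forall>i<n. \<forall>k. 0 \<le> x i $ k \<and> x i $ k \<le> sqrt (real n))"

definition unif_points :: "nat \<Rightarrow> (nat \<Rightarrow> real^2) measure" where
  "unif_points n = PiM {0..<n}
     (\<lambda>_. uniform_measure lborel (cbox (0::real^2) (\<chi> k. sqrt (real n))))"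

end

theory Submission
  imports Defs
begin

text \<open>
  Enumerate the points in the order in which a scan of the square along horizontal strips of
  unit height meets them.  Points that are d steps apart in this order are close on average:
  the d-th neighbour distances sum to at most (6d + 1) n.  Hence the path through the points in
  scan order has length at most 7 n, which bounds the minimal spanning tree, so c1 = 7.

  For n \<ge> 6, joining points 2 resp. 3 steps apart (plus a few edges linking the residue classes)
  gives two more connected graphs of length O(n); the three graphs are pairwise disjoint.  Spanning trees
  S1, S2, S3 extracted from them are disjoint, and every spanning tree T has n - 1 edges, so
  some Si shares at most (n - 1)/3 edges with T and has at least n/2 edges outside T.  This holds
  for every configuration in the square, hence almost surely for uniform points.
\<close>

definition components :: "'a set \<Rightarrow> ('a \<times> 'a) set \<Rightarrow> nat" where
  "components V E = card ((\<lambda>i. (E \<union> E\<inverse>)\<^sup>* `` {i}) ` V)"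

lemma equiv_undirected_reach: "equiv UNIV ((E \<union> E\<inverse>)\<^sup>*)"
  by (simp add: equiv_def refl_rtrancl sym_rtrancl[OF sym_Un_converse] trans_rtrancl)

lemma undirected_reach_class_eq_iff:
  "(E \<union> E\<inverse>)\<^sup>* `` {x} = (E \<union> E\<inverse>)\<^sup>* `` {y} \<longleftrightarrow> (x,y) \<in> (E \<union> E\<inverse>)\<^sup>*"
  by (rule eq_equiv_class_iff[OF equiv_undirected_reach UNIV_I UNIV_I])

lemma mem_undirected_reach_class_iff:
  "x \<in> (E \<union> E\<inverse>)\<^sup>* `` {y} \<longleftrightarrow> (E \<union> E\<inverse>)\<^sup>* `` {x} = (E \<union> E\<inverse>)\<^sup>* `` {y}"
  using equiv_class_eq_iff[OF equiv_undirected_reach, of y x E] by auto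

lemma rtrancl_invariant:
  assumes "(x,y) \<in> S\<^sup>*" "\<And>a b. (a,b) \<in> S \<Longrightarrow> f a = f b"
  shows "f x = f y"
  using assms(1) by (induction rule: rtrancl_induct) (auto dest: assms(2))

lemma undirected_reach_insert_class:
  fixes E :: "('a \<times> 'a) set" and u v :: 'a
  defines "R \<equiv> (E \<union> E\<inverse>)\<^sup>*"
    and "M \<equiv> (E \<union> E\<inverse>)\<^sup>* `` {u} \<union> (E \<union> E\<inverse>)\<^sup>* `` {v}"
  shows "(insert (u,v) E \<union> (insert (u,v) E)\<inverse>)\<^sup>* `` {i} = (if i \<in> M then M else R``{i})"
    (is "?R' `` {i} = ?f i")
proof
  have cls: "x \<in> R``{y} \<longleftrightarrow> R``{x} = R``{y}" for x y
    unfolding R_def by (rule mem_undirected_reach_class_iff)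
  have cls': "x \<in> ?R'``{y} \<longleftrightarrow> ?R'``{x} = ?R'``{y}" for x y
    by (rule mem_undirected_reach_class_iff)
  have M: "x \<in> M \<longleftrightarrow> R``{x} = R``{u} \<or> R``{x} = R``{v}" for x
    unfolding M_def R_def[symmetric] by (simp only: Un_iff cls)
  have "?f a = ?f b" if "(a,b) \<in> insert (u,v) E \<union> (insert (u,v) E)\<inverse>" for a b
  proof (cases "(a,b) \<in> R")
    case True
    then have "R``{a} = R``{b}" using cls by blast
    then show ?thesis using M by simp
  next
    case False
    then have "a \<in> {u,v}" "b \<in> {u,v}" using that unfolding R_def by auto
    moreover have "u \<in> M" "v \<in> M" by (simp_all add: M)
    ultimately show ?thesis by auto
  qed
  then have "?f i = ?f j" if "(i,j) \<in> ?R'" for j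
    using that by (rule rtrancl_invariant[rotated])
  moreover have "j \<in> ?f j" for j by (simp add: R_def)
  ultimately show "?R' `` {i} \<subseteq> ?f i" by blast
  have "R \<subseteq> ?R'" unfolding R_def by (intro rtrancl_mono) blast
  then have R'_cls: "?R'``{x} = ?R'``{y}" if "R``{x} = R``{y}" for x y
    using that unfolding cls[symmetric] cls'[symmetric] by blast
  have "?R'``{u} = ?R'``{v}" unfolding cls'[symmetric] by blast
  then have R'_M: "?R'``{x} = ?R'``{i}" if "x \<in> M" "i \<in> M" for x
    using that R'_cls unfolding M by metis
  have "M \<subseteq> ?R'``{i}" if "i \<in> M" using R'_M[OF _ that] by (auto simp: cls')
  moreover have "R``{i} \<subseteq> ?R'``{i}" using \<open>R \<subseteq> ?R'\<close> by blast
  ultimately show "?f i \<subseteq> ?R' `` {i}" by auto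
qed

lemma components_insert_bridge:
  fixes E :: "('a \<times> 'a) set"
  assumes "finite V" "u \<in> V" "v \<in> V" "(u,v) \<notin> (E \<union> E\<inverse>)\<^sup>*"
  shows "components V E = components V (insert (u,v) E) + 1"
proof -
  define c where "c i = (E \<union> E\<inverse>)\<^sup>* `` {i}" for i
  define M where "M = c u \<union> c v"
  have cls: "x \<in> c y \<longleftrightarrow> c x = c y" for x y
    unfolding c_def by (rule mem_undirected_reach_class_iff)
  have M_iff: "i \<in> M \<longleftrightarrow> c i = c u \<or> c i = c v" for i
    unfolding M_def by (simp only: Un_iff cls)
  have "(\<lambda>i. if i \<in> M then M else c i) ` V = insert M (c ` V - {c u, c v})"
  proof (intro equalityI subsetI)
    fix C assume "C \<in> (\<lambda>i. if i \<in> M then M else c i) ` V"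
    then show "C \<in> insert M (c ` V - {c u, c v})" by (auto simp: M_iff)
  next
    fix C assume C: "C \<in> insert M (c ` V - {c u, c v})"
    have "M = (if u \<in> M then M else c u)" by (simp add: M_iff)
    then show "C \<in> (\<lambda>i. if i \<in> M then M else c i) ` V"
      using C assms(2) by (auto simp: M_iff)
  qed
  then have components': "components V (insert (u,v) E) = card (insert M (c ` V - {c u, c v}))"
    unfolding components_def undirected_reach_insert_class c_def M_def by simp
  have uv: "c u \<in> c ` V" "c v \<in> c ` V" "c u \<noteq> c v"
    using assms cls unfolding c_def by auto
  have "M \<notin> c ` V"
  proof
    assume "M \<in> c ` V"
    then obtain i where "M = c i" by blast
    then have "c u = c i" "c v = c i" using cls unfolding M_def by auto
    then show False using uv(3) by simp
  qed
  then have "card (insert M (c ` V - {c u, c v})) = card (c ` V - {c u, c v}) + 1"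
    using assms(1) by simp
  also have "\<dots> = card (c ` V) - 2 + 1"
    using uv assms(1) by (simp add: card_Diff_subset)
  moreover have "2 \<le> card (c ` V)"
    using card_mono[of "c ` V" "{c u, c v}"] uv assms(1) by simp
  ultimately show ?thesis using components' by (simp add: components_def c_def)
qed

lemma components_empty:
  assumes "finite V"
  shows "components V {} = card V"
proof -
  have "(\<lambda>i. ({} \<union> {}\<inverse>)\<^sup>* `` {i}) ` V = (\<lambda>i. {i}) ` V" by simp
  then show ?thesis by (simp add: components_def card_image)
qed

lemma components_plus_card_forest:
  assumes "finite V" "finite T" "T \<subseteq> V \<times> V"
    and bridges: "\<And>u v. (u,v) \<in> T \<Longrightarrow> (u,v) \<notin> ((T - {(u,v)}) \<union> (T - {(u,v)})\<inverse>)\<^sup>*"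
  shows "components V T + card T = card V"
  using assms(2) subset_refl
proof (induction T rule: finite_subset_induct')
  case empty
  then show ?case by (simp add: components_empty assms(1))
next
  case (insert e F)
  obtain u v where e: "e = (u,v)" "u \<in> V" "v \<in> V" using insert.hyps(2) assms(3) by auto
  have "(F \<union> F\<inverse>)\<^sup>* \<subseteq> ((T - {(u,v)}) \<union> (T - {(u,v)})\<inverse>)\<^sup>*"
    using insert.hyps(3,4) e(1) by (intro rtrancl_mono) auto
  then have "(u,v) \<notin> (F \<union> F\<inverse>)\<^sup>*" using bridges insert.hyps(2) e(1) by blast
  then have "components V F = components V (insert e F) + 1"
    using components_insert_bridge[OF assms(1) e(2,3)] e(1) by simp
  then show ?case using insert by simp
qed

lemma undirected_reach_insert_redundant:
  assumes "(u,v) \<in> (F \<union> F\<inverse>)\<^sup>*"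
  shows "(insert (u,v) F \<union> (insert (u,v) F)\<inverse>)\<^sup>* = (F \<union> F\<inverse>)\<^sup>*"
proof
  have "(v,u) \<in> (F \<union> F\<inverse>)\<^sup>*"
    using symD[OF sym_rtrancl[OF sym_Un_converse] assms] .
  then show "(insert (u,v) F \<union> (insert (u,v) F)\<inverse>)\<^sup>* \<subseteq> (F \<union> F\<inverse>)\<^sup>*"
    using assms by (intro rtrancl_subset_rtrancl) auto
  show "(F \<union> F\<inverse>)\<^sup>* \<subseteq> (insert (u,v) F \<union> (insert (u,v) F)\<inverse>)\<^sup>*"
    by (intro rtrancl_mono) auto
qed

lemma finite_cg_edges: "finite (cg_edges n)"
  by (rule finite_subset[of _ "{..<n} \<times> {..<n}"]) (auto simp: cg_edges_def)

lemma cg_edges_subset: "cg_edges n \<subseteq> {..<n} \<times> {..<n}"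
  by (auto simp: cg_edges_def)

lemma components_connected:
  assumes "graph_connected n E" "0 < n"
  shows "components {..<n} E = 1"
proof -
  have "(E \<union> E\<inverse>)\<^sup>* `` {i} = (E \<union> E\<inverse>)\<^sup>* `` {0}" if "i \<in> {..<n}" for i
    using assms that unfolding graph_connected_def undirected_reach_class_eq_iff by simp
  then have "(\<lambda>i. (E \<union> E\<inverse>)\<^sup>* `` {i}) ` {..<n} = (\<lambda>_. (E \<union> E\<inverse>)\<^sup>* `` {0}) ` {..<n}"
    by (rule image_cong[OF refl])
  also have "\<dots> = {(E \<union> E\<inverse>)\<^sup>* `` {0}}"
    using assms(2) by (intro image_constant) simp
  finally show ?thesis by (simp add: components_def)
qed

lemma spanning_tree_card:
  assumes "spanning_tree n T"
  shows "card T = n - 1"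
proof (cases "n = 0")
  case True
  then show ?thesis using assms by (simp add: spanning_tree_def cg_edges_def)
next
  case False
  have T: "T \<subseteq> cg_edges n" "graph_connected n T" "\<And>e. e \<in> T \<Longrightarrow> \<not> graph_connected n (T - {e})"
    using assms unfolding spanning_tree_def by auto
  have bridges: "(u,v) \<notin> ((T - {(u,v)}) \<union> (T - {(u,v)})\<inverse>)\<^sup>*" if "(u,v) \<in> T" for u v
  proof
    assume "(u,v) \<in> ((T - {(u,v)}) \<union> (T - {(u,v)})\<inverse>)\<^sup>*"
    from undirected_reach_insert_redundant[OF this] have "graph_connected n (T - {(u,v)})"
      using T(2) that by (simp add: graph_connected_def insert_absorb)
    then show False using T(3) that by blast
  qed
  have "finite T" using T(1) finite_cg_edges finite_subset by blast
  moreover have "T \<subseteq> {..<n} \<times> {..<n}" using T(1) cg_edges_subset by blast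
  ultimately have "components {..<n} T + card T = card {..<n}"
    by (rule components_plus_card_forest[OF finite_lessThan _ _ bridges])
  then show ?thesis using components_connected[OF T(2)] False by simp
qed

lemma ex_spanning_tree_subset:
  assumes "P \<subseteq> cg_edges n" "graph_connected n P"
  shows "\<exists>S\<subseteq>P. spanning_tree n S"
proof -
  obtain S where S: "S \<subseteq> P \<and> graph_connected n S"
    and min: "\<forall>S'. S' \<subseteq> P \<and> graph_connected n S' \<longrightarrow> card S \<le> card S'"
    using ex_has_least_nat[of "\<lambda>S. S \<subseteq> P \<and> graph_connected n S" P card] assms(2) by blast
  have "S \<subseteq> cg_edges n" using S assms(1) by blast
  then have "finite S" using finite_cg_edges by (rule finite_subset)
  have "\<not> graph_connected n (S - {e})" if "e \<in> S" for e
  proof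
    assume "graph_connected n (S - {e})"
    then have "card S \<le> card (S - {e})" using S min by blast
    then show False using card_Diff1_less[OF \<open>finite S\<close> that] by simp
  qed
  then have "spanning_tree n S" using S \<open>S \<subseteq> cg_edges n\<close> by (simp add: spanning_tree_def)
  then show ?thesis using S by blast
qed

lemma graph_connected_if_reach_from_0:
  assumes "\<And>a. a < n \<Longrightarrow> (0,a) \<in> (E \<union> E\<inverse>)\<^sup>*"
  shows "graph_connected n E"
proof -
  have same_class: "(E \<union> E\<inverse>)\<^sup>* `` {a} = (E \<union> E\<inverse>)\<^sup>* `` {0}" if "a < n" for a
    using assms[OF that] unfolding undirected_reach_class_eq_iff[symmetric] by (rule sym)
  show ?thesis
    unfolding graph_connected_def undirected_reach_class_eq_iff[symmetric]
    using same_class by (metis (no_types))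
qed

lemma tree_len_mono:
  assumes "finite E" "S \<subseteq> E"
  shows "tree_len x S \<le> tree_len x E"
  unfolding tree_len_def by (rule sum_mono2[OF assms]) auto

lemma tree_len_Un_le:
  assumes "finite A" "finite B"
  shows "tree_len x (A \<union> B) \<le> tree_len x A + tree_len x B"
proof -
  have "0 \<le> tree_len x (A \<inter> B)" unfolding tree_len_def by (rule sum_nonneg) auto
  then show ?thesis
    unfolding tree_len_def using sum_Un[OF assms, of "\<lambda>(i,j). dist (x i) (x j)"] by linarith
qed

text \<open>
  The scan key: strip index first, then abscissa.  As abscissae lie in [0, s], the factor 2 s
  puts every point of a higher strip strictly later.
\<close>
definition row_key :: "real \<Rightarrow> real^2 \<Rightarrow> real" where
  "row_key s p = 2 * s * of_int \<lfloor>p$2\<rfloor> + p$1"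

lemma dist_le_abs_components: "dist (p::real^2) q \<le> \<bar>p$1 - q$1\<bar> + \<bar>p$2 - q$2\<bar>"
proof -
  have "dist p q \<le> (\<Sum>i\<in>UNIV. \<bar>(p - q)$i\<bar>)" unfolding dist_norm by (rule norm_le_l1_cart)
  then show ?thesis by (simp add: UNIV_2)
qed

lemma dist_le_row_key_diff:
  fixes p q :: "real^2"
  assumes s: "1 \<le> s" and p: "\<And>k. 0 \<le> p$k \<and> p$k \<le> s" and q: "\<And>k. 0 \<le> q$k \<and> q$k \<le> s"
    and le: "row_key s p \<le> row_key s q"
  shows "dist p q \<le> 2 * (row_key s q - row_key s p) + 1"
proof -
  define z where "z = \<lfloor>q$2\<rfloor> - \<lfloor>p$2\<rfloor>"
  define m :: real where "m = of_int z"
  have key: "row_key s q - row_key s p = 2 * (s * m) + (q$1 - p$1)"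
    unfolding row_key_def m_def z_def by (simp add: algebra_simps)
  have vert: "\<bar>p$2 - q$2\<bar> \<le> \<bar>m\<bar> + 1"
    unfolding m_def z_def by linarith
  have horiz: "\<bar>p$1 - q$1\<bar> \<le> s" using p[of 1] q[of 1] by auto
  consider "z = 0" | "z \<ge> 1" | "z \<le> -1" by linarith
  then show ?thesis
  proof cases
    case 1
    then show ?thesis using key vert le dist_le_abs_components[of p q] by (simp add: m_def)
  next
    case 2
    then have m: "1 \<le> m" by (simp add: m_def)
    define X where "X = s * m"
    have X: "s \<le> X" "m \<le> X"
      unfolding X_def using m s by (simp_all add: mult_left_mono mult_right_mono)
    have "dist p q \<le> s + m + 1"
      using vert horiz m dist_le_abs_components[of p q] by linarith
    moreover have "row_key s q - row_key s p = 2 * X + (q$1 - p$1)" using key by (simp add: X_def)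
    ultimately show ?thesis using X p[of 1] q[of 1] unfolding ring_distribs by linarith
  next
    case 3
    then have "s * m \<le> s * -1" using s by (intro mult_left_mono) (simp_all add: m_def)
    then have "row_key s q - row_key s p < 0" using key s p[of 1] q[of 1] by linarith
    then show ?thesis using le by linarith
  qed
qed

lemma row_key_bounds:
  assumes s: "1 \<le> s" and p: "\<And>k. 0 \<le> p$k \<and> p$k \<le> s"
  shows "0 \<le> row_key s p" "row_key s p \<le> 3 * s\<^sup>2"
proof -
  have row: "0 \<le> (of_int \<lfloor>p$2\<rfloor> :: real)" "of_int \<lfloor>p$2\<rfloor> \<le> s"
    using p[of 2] of_int_floor_le[of "p$2"] by (simp, linarith)
  then show "0 \<le> row_key s p" using p[of 1] s by (simp add: row_key_def)
  have "2 * s * of_int \<lfloor>p$2\<rfloor> \<le> 2 * s * s" using row s by (intro mult_left_mono) auto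
  moreover have "s \<le> s * s" using s by (simp add: mult_left_mono)
  ultimately show "row_key s p \<le> 3 * s\<^sup>2" using p[of 1] by (simp add: row_key_def power2_eq_square)
qed

lemma sum_shift_diff:
  fixes g :: "nat \<Rightarrow> 'a::ab_group_add"
  shows "(\<Sum>a<m. g (a + d) - g a) = (\<Sum>a<d. g (a + m) - g a)"
proof (induction m)
  case (Suc m)
  have "(\<Sum>a<d. g (a + Suc m) - g a) - (\<Sum>a<d. g (a + m) - g a) = (\<Sum>a<d. g (Suc a + m) - g (a + m))"
    by (simp add: sum_subtractf[symmetric])
  also have "\<dots> = g (d + m) - g m"
    using sum_lessThan_telescope[where f = "\<lambda>a. g (a + m)"] by simp
  finally show ?case using Suc by (simp add: algebra_simps)
qed simp

lemma sum_stride_dist_le: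
  fixes y :: "nat \<Rightarrow> 'a::metric_space" and k :: "nat \<Rightarrow> real"
  assumes "d \<le> n"
    and k_bounds: "\<And>a. a < n \<Longrightarrow> 0 \<le> k a \<and> k a \<le> R"
    and dist_k: "\<And>a b. a \<le> b \<Longrightarrow> b < n \<Longrightarrow> dist (y a) (y b) \<le> 2 * (k b - k a) + 1"
  shows "(\<Sum>a<n - d. dist (y a) (y (a + d))) \<le> 2 * real d * R + real n"
proof -
  have "(\<Sum>a<n - d. dist (y a) (y (a + d))) \<le> (\<Sum>a<n - d. 2 * (k (a + d) - k a) + 1)"
    by (rule sum_mono) (use dist_k in auto)
  also have "\<dots> = 2 * (\<Sum>a<d. k (a + (n - d)) - k a) + real (n - d)"
    by (simp add: sum.distrib sum_distrib_left sum_shift_diff)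
  also have "(\<Sum>a<d. k (a + (n - d)) - k a) \<le> (\<Sum>a<d. R)"
  proof (rule sum_mono)
    fix a assume "a \<in> {..<d}"
    then have "a < n" "a + (n - d) < n" using assms(1) by auto
    then show "k (a + (n - d)) - k a \<le> R"
      using k_bounds[of a] k_bounds[of "a + (n - d)"] by linarith
  qed
  finally show ?thesis by simp
qed

lemma ex_bij_betw_sorted:
  fixes f :: "nat \<Rightarrow> 'a::linorder"
  obtains \<sigma> where "bij_betw \<sigma> {..<n} {..<n}" "\<And>a b. a \<le> b \<Longrightarrow> b < n \<Longrightarrow> f (\<sigma> a) \<le> f (\<sigma> b)"
proof
  define xs where "xs = sort_key f [0..<n]"
  have "length xs = n" "distinct xs" "set xs = {..<n}" by (auto simp: xs_def)
  then show "bij_betw ((!) xs) {..<n} {..<n}" by (intro bij_betw_nth) auto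
  show "f (xs ! a) \<le> f (xs ! b)" if "a \<le> b" "b < n" for a b
    using sorted_nth_mono[OF sorted_sort_key[of f "[0..<n]"], of a b] that
    by (simp add: xs_def)
qed

definition relabel_edge :: "(nat \<Rightarrow> nat) \<Rightarrow> nat \<times> nat \<Rightarrow> nat \<times> nat" where
  "relabel_edge \<sigma> e = (min (\<sigma> (fst e)) (\<sigma> (snd e)), max (\<sigma> (fst e)) (\<sigma> (snd e)))"

lemma relabel_edge_in_cg_edges:
  assumes "bij_betw \<sigma> {..<n} {..<n}" "e \<in> cg_edges n"
  shows "relabel_edge \<sigma> e \<in> cg_edges n"
proof -
  obtain a b where e: "e = (a,b)" "a < b" "b < n" using assms(2) by (auto simp: cg_edges_def)
  then have "\<sigma> a \<noteq> \<sigma> b" "\<sigma> a < n" "\<sigma> b < n"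
    using assms(1) by (auto simp: bij_betw_def inj_on_def)
  then show ?thesis by (auto simp: relabel_edge_def cg_edges_def e)
qed

lemma inj_on_relabel_edge:
  assumes "bij_betw \<sigma> {..<n} {..<n}"
  shows "inj_on (relabel_edge \<sigma>) (cg_edges n)"
proof
  fix e e' assume e: "e \<in> cg_edges n" and e': "e' \<in> cg_edges n"
    and eq: "relabel_edge \<sigma> e = relabel_edge \<sigma> e'"
  obtain a b a' b' where ab: "e = (a,b)" "e' = (a',b')" "a < b" "a' < b'" "b < n" "b' < n"
    using e e' by (auto simp: cg_edges_def)
  have "{\<sigma> a, \<sigma> b} = {\<sigma> a', \<sigma> b'}"
    using eq by (auto simp: relabel_edge_def ab min_def max_def split: if_splits)
  moreover have "inj_on \<sigma> {..<n}" using assms by (rule bij_betw_imp_inj_on)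
  ultimately have "{a, b} = {a', b'}"
    using inj_on_image_eq_iff[of \<sigma> "{..<n}" "{a, b}" "{a', b'}"] ab by auto
  then show "e = e'" using ab by (auto simp: doubleton_eq_iff)
qed

lemma tree_len_relabel:
  assumes "bij_betw \<sigma> {..<n} {..<n}" "Q \<subseteq> cg_edges n"
  shows "tree_len x (relabel_edge \<sigma> ` Q) = tree_len (x \<circ> \<sigma>) Q"
proof -
  have "inj_on (relabel_edge \<sigma>) Q"
    using inj_on_relabel_edge[OF assms(1)] assms(2) by (rule inj_on_subset)
  then have "tree_len x (relabel_edge \<sigma> ` Q) =
      (\<Sum>e\<in>Q. (\<lambda>(i,j). dist (x i) (x j)) (relabel_edge \<sigma> e))"
    unfolding tree_len_def by (simp add: sum.reindex)
  also have "\<dots> = tree_len (x \<circ> \<sigma>) Q"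
    unfolding tree_len_def
    by (intro sum.cong) (auto simp: relabel_edge_def min_def max_def dist_commute)
  finally show ?thesis .
qed

lemma undirected_reach_relabel:
  assumes "(a,b) \<in> (Q \<union> Q\<inverse>)\<^sup>*"
  shows "(\<sigma> a, \<sigma> b) \<in> (relabel_edge \<sigma> ` Q \<union> (relabel_edge \<sigma> ` Q)\<inverse>)\<^sup>*"
  using assms
proof (induction rule: rtrancl_induct)
  case (step y z)
  have "relabel_edge \<sigma> (y,z) \<in> relabel_edge \<sigma> ` Q \<or> relabel_edge \<sigma> (z,y) \<in> relabel_edge \<sigma> ` Q"
    using step.hyps(2) by auto
  then have "(\<sigma> y, \<sigma> z) \<in> relabel_edge \<sigma> ` Q \<union> (relabel_edge \<sigma> ` Q)\<inverse>"
    by (auto simp: relabel_edge_def min_def max_def split: if_splits)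
  then show ?case using step.IH by (rule rtrancl_into_rtrancl[rotated])
qed simp

lemma graph_connected_relabel:
  assumes "bij_betw \<sigma> {..<n} {..<n}" "graph_connected n Q"
  shows "graph_connected n (relabel_edge \<sigma> ` Q)"
  unfolding graph_connected_def
proof (intro allI impI)
  fix i j assume "i < n" "j < n"
  moreover have "\<sigma> ` {..<n} = {..<n}" using assms(1) by (rule bij_betw_imp_surj_on)
  ultimately obtain a b where "a < n" "b < n" "i = \<sigma> a" "j = \<sigma> b"
    by (metis imageE lessThan_iff)
  moreover have "(a, b) \<in> (Q \<union> Q\<inverse>)\<^sup>*"
    using assms(2) \<open>a < n\<close> \<open>b < n\<close> unfolding graph_connected_def by blast
  ultimately show "(i, j) \<in> (relabel_edge \<sigma> ` Q \<union> (relabel_edge \<sigma> ` Q)\<inverse>)\<^sup>*"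
    using undirected_reach_relabel by blast
qed

lemma ex_spanning_tree_relabel:
  assumes "bij_betw \<sigma> {..<n} {..<n}" "Q \<subseteq> cg_edges n" "graph_connected n Q"
  obtains S where "S \<subseteq> relabel_edge \<sigma> ` Q" "spanning_tree n S" "tree_len x S \<le> tree_len (x \<circ> \<sigma>) Q"
proof -
  have sub: "relabel_edge \<sigma> ` Q \<subseteq> cg_edges n"
    using assms(1,2) relabel_edge_in_cg_edges by blast
  obtain S where S: "S \<subseteq> relabel_edge \<sigma> ` Q" "spanning_tree n S"
    using ex_spanning_tree_subset[OF sub graph_connected_relabel[OF assms(1,3)]] by blast
  have "finite (relabel_edge \<sigma> ` Q)" using sub finite_cg_edges by (rule finite_subset)
  then have "tree_len x S \<le> tree_len x (relabel_edge \<sigma> ` Q)" using S(1) by (rule tree_len_mono)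
  then show ?thesis using that S tree_len_relabel[OF assms(1,2)] by simp
qed

definition stride_edges :: "nat \<Rightarrow> nat \<Rightarrow> (nat \<times> nat) set" where
  "stride_edges n d = (\<lambda>a. (a, a + d)) ` {..<n - d}"

lemma stride_edge_mem: "a + d = b \<Longrightarrow> b < n \<Longrightarrow> (a, b) \<in> stride_edges n d"
  unfolding stride_edges_def by (intro image_eqI[where x = a]) auto

lemma stride_edges_subset_cg_edges: "0 < d \<Longrightarrow> stride_edges n d \<subseteq> cg_edges n"
  by (auto simp: stride_edges_def cg_edges_def)

lemma tree_len_stride_edges:
  "tree_len y (stride_edges n d) = (\<Sum>a<n - d. dist (y a) (y (a + d)))"
  unfolding tree_len_def stride_edges_def by (subst sum.reindex) (auto simp: inj_on_def)

lemma reach_from_0_stride: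
  assumes "0 < d" "stride_edges n d \<subseteq> E" "\<And>r. r < d \<Longrightarrow> (0, r) \<in> (E \<union> E\<inverse>)\<^sup>*" "a < n"
  shows "(0, a) \<in> (E \<union> E\<inverse>)\<^sup>*"
  using assms(4)
proof (induction a rule: less_induct)
  case (less a)
  show ?case
  proof (cases "a < d")
    case False
    then have "(a - d, a) \<in> E"
      using subsetD[OF assms(2) stride_edge_mem[of "a - d" d a n]] less.prems by simp
    moreover have "(0, a - d) \<in> (E \<union> E\<inverse>)\<^sup>*"
      using less.IH[of "a - d"] assms(1) False less.prems by simp
    ultimately show ?thesis by (meson UnI1 rtrancl.rtrancl_into_rtrancl)
  qed (rule assms(3))
qed

text \<open>
  The extra edges link the residue classes mod 2 resp. mod 3.  An edge (a, b) has b - a = 1 in the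
  path, b - a \<in> {2, 5} in the first and b - a \<in> {3, 4} in the second graph, so the three graphs
  are disjoint.
\<close>
definition stride2_graph :: "nat \<Rightarrow> (nat \<times> nat) set" where
  "stride2_graph n = stride_edges n 2 \<union> {(0,5)}"

definition stride3_graph :: "nat \<Rightarrow> (nat \<times> nat) set" where
  "stride3_graph n = stride_edges n 3 \<union> {(0,4), (1,5)}"

lemma stride_graphs_subset_cg_edges:
  assumes "6 \<le> n"
  shows "stride_edges n 1 \<subseteq> cg_edges n" "stride2_graph n \<subseteq> cg_edges n"
    "stride3_graph n \<subseteq> cg_edges n"
  using assms stride_edges_subset_cg_edges[of _ n]
  by (auto simp: stride2_graph_def stride3_graph_def cg_edges_def)

lemma stride_graphs_disjoint:
  "stride_edges n 1 \<inter> stride2_graph n = {}"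
  "stride_edges n 1 \<inter> stride3_graph n = {}"
  "stride2_graph n \<inter> stride3_graph n = {}"
  by (auto simp: stride2_graph_def stride3_graph_def stride_edges_def)

lemma graph_connected_stride_edges_1: "graph_connected n (stride_edges n 1)"
  by (rule graph_connected_if_reach_from_0, rule reach_from_0_stride[of 1]) auto

lemma graph_connected_stride_graphs:
  assumes "6 \<le> n"
  shows "graph_connected n (stride2_graph n)" "graph_connected n (stride3_graph n)"
proof -
  let ?R2 = "stride2_graph n \<union> (stride2_graph n)\<inverse>"
  have "(0,5) \<in> ?R2" "(5,3) \<in> ?R2" "(3,1) \<in> ?R2"
    using assms stride_edge_mem[of 3 2 5 n] stride_edge_mem[of 1 2 3 n]
    by (auto simp: stride2_graph_def)
  then have "(0,1) \<in> ?R2\<^sup>*" by (meson rtrancl.rtrancl_into_rtrancl rtrancl.rtrancl_refl)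
  then have low2: "r < 2 \<Longrightarrow> (0, r) \<in> ?R2\<^sup>*" for r by (cases r) auto
  have "stride_edges n 2 \<subseteq> stride2_graph n" by (auto simp: stride2_graph_def)
  then show "graph_connected n (stride2_graph n)"
    using reach_from_0_stride[of 2 n "stride2_graph n", OF _ _ low2]
    by (intro graph_connected_if_reach_from_0) auto
  let ?R3 = "stride3_graph n \<union> (stride3_graph n)\<inverse>"
  have "(0,4) \<in> ?R3" "(4,1) \<in> ?R3" "(1,5) \<in> ?R3" "(5,2) \<in> ?R3"
    using assms stride_edge_mem[of 1 3 4 n] stride_edge_mem[of 2 3 5 n]
    by (auto simp: stride3_graph_def)
  then have reach: "(0,1) \<in> ?R3\<^sup>*" "(0,2) \<in> ?R3\<^sup>*"
    by (meson rtrancl.rtrancl_into_rtrancl rtrancl.rtrancl_refl)+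
  have low3: "(0, r) \<in> ?R3\<^sup>*" if "r < 3" for r
  proof -
    have "r = 0 \<or> r = 1 \<or> r = 2" using that by presburger
    then show ?thesis using reach by auto
  qed
  have "stride_edges n 3 \<subseteq> stride3_graph n" by (auto simp: stride3_graph_def)
  then show "graph_connected n (stride3_graph n)"
    using reach_from_0_stride[of 3 n "stride3_graph n", OF _ _ low3]
    by (intro graph_connected_if_reach_from_0) auto
qed

lemma ex_row_key_sorted_relabelling:
  assumes "in_square n x" "0 < n"
  obtains \<sigma> where "bij_betw \<sigma> {..<n} {..<n}"
    and "\<And>d. d \<le> n \<Longrightarrow> tree_len (x \<circ> \<sigma>) (stride_edges n d) \<le> (6 * real d + 1) * real n"
    and "\<And>a b. a < n \<Longrightarrow> b < n \<Longrightarrow> dist (x (\<sigma> a)) (x (\<sigma> b)) \<le> 6 * real n + 1"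
proof -
  define s where "s = sqrt (real n)"
  have s: "1 \<le> s" "s\<^sup>2 = real n" using assms(2) by (simp_all add: s_def)
  obtain \<sigma> where \<sigma>: "bij_betw \<sigma> {..<n} {..<n}"
    and sorted: "\<And>a b. a \<le> b \<Longrightarrow> b < n \<Longrightarrow> row_key s (x (\<sigma> a)) \<le> row_key s (x (\<sigma> b))"
    using ex_bij_betw_sorted[of n "\<lambda>i. row_key s (x i)"] by blast
  define k where "k a = row_key s (x (\<sigma> a))" for a
  have in_sq: "0 \<le> x (\<sigma> a) $ j \<and> x (\<sigma> a) $ j \<le> s" if "a < n" for a j
    using assms(1) bij_betwE[OF \<sigma>] that unfolding in_square_def s_def by blast
  have k_bounds: "0 \<le> k a \<and> k a \<le> 3 * real n" if "a < n" for a
    using row_key_bounds[OF s(1) in_sq[OF that]] s(2) by (simp add: k_def)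
  have dist_k: "dist (x (\<sigma> a)) (x (\<sigma> b)) \<le> 2 * (k b - k a) + 1" if "a \<le> b" "b < n" for a b
    unfolding k_def using that by (intro dist_le_row_key_diff s(1) in_sq sorted) auto
  show ?thesis
  proof (rule that[OF \<sigma>])
    fix d assume "d \<le> n"
    have "tree_len (x \<circ> \<sigma>) (stride_edges n d) = (\<Sum>a<n - d. dist (x (\<sigma> a)) (x (\<sigma> (a + d))))"
      by (simp add: tree_len_stride_edges)
    also have "\<dots> \<le> 2 * real d * (3 * real n) + real n"
      using \<open>d \<le> n\<close> k_bounds dist_k by (rule sum_stride_dist_le)
    finally show "tree_len (x \<circ> \<sigma>) (stride_edges n d) \<le> (6 * real d + 1) * real n"
      by (simp add: algebra_simps)
  next
    fix a b assume "a < n" "b < n"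
    then show "dist (x (\<sigma> a)) (x (\<sigma> b)) \<le> 6 * real n + 1"
      using dist_k[of a b] dist_k[of b a] k_bounds[of a] k_bounds[of b]
      by (cases "a \<le> b") (auto simp: dist_commute)
  qed
qed

lemma ex_short_spanning_tree:
  assumes "in_square n x" "0 < n"
  shows "\<exists>S. spanning_tree n S \<and> tree_len x S \<le> 7 * real n"
proof -
  obtain \<sigma> where \<sigma>: "bij_betw \<sigma> {..<n} {..<n}"
    and stride: "\<And>d. d \<le> n \<Longrightarrow> tree_len (x \<circ> \<sigma>) (stride_edges n d) \<le> (6 * real d + 1) * real n"
    by (rule ex_row_key_sorted_relabelling[OF assms]) (rule that)
  have "stride_edges n 1 \<subseteq> cg_edges n" by (simp add: stride_edges_subset_cg_edges)
  then obtain S where "spanning_tree n S" "tree_len x S \<le> tree_len (x \<circ> \<sigma>) (stride_edges n 1)"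
    using ex_spanning_tree_relabel[OF \<sigma> _ graph_connected_stride_edges_1] by blast
  moreover have "tree_len (x \<circ> \<sigma>) (stride_edges n 1) \<le> 7 * real n"
    using stride[of 1] assms(2) by simp
  ultimately show ?thesis by (meson order_trans)
qed

lemma is_MST_tree_len_le:
  assumes "in_square n x" "is_MST n x T"
  shows "tree_len x T \<le> 7 * real n"
proof (cases "n = 0")
  case True
  then have "T = {}" using assms(2) by (auto simp: is_MST_def spanning_tree_def cg_edges_def)
  then show ?thesis by (simp add: tree_len_def)
next
  case False
  then obtain S where "spanning_tree n S" "tree_len x S \<le> 7 * real n"
    using ex_short_spanning_tree[OF assms(1)] by blast
  moreover have "tree_len x T \<le> tree_len x S"
    using assms(2) \<open>spanning_tree n S\<close> unfolding is_MST_def by blast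
  ultimately show ?thesis by linarith
qed

lemma tree_len_stride_graphs_le:
  fixes y :: "nat \<Rightarrow> real^2"
  assumes "6 \<le> n"
    and stride: "\<And>d. d \<le> n \<Longrightarrow> tree_len y (stride_edges n d) \<le> (6 * real d + 1) * real n"
    and pair: "\<And>a b. a < n \<Longrightarrow> b < n \<Longrightarrow> dist (y a) (y b) \<le> 6 * real n + 1"
  shows "tree_len y (stride_edges n 1) \<le> 84 * real n" "tree_len y (stride2_graph n) \<le> 84 * real n"
    "tree_len y (stride3_graph n) \<le> 84 * real n"
proof -
  have fin: "finite (stride_edges n d)" for d by (simp add: stride_edges_def)
  have stride': "tree_len y (stride_edges n 1) \<le> 7 * real n"
    "tree_len y (stride_edges n 2) \<le> 13 * real n" "tree_len y (stride_edges n 3) \<le> 19 * real n"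
    using stride[of 1] stride[of 2] stride[of 3] assms(1) by simp_all
  have pair': "dist (y 0) (y 5) \<le> 6 * real n + 1" "dist (y 0) (y 4) \<le> 6 * real n + 1"
    "dist (y 1) (y 5) \<le> 6 * real n + 1"
    using assms(1) by (simp_all add: pair)
  show "tree_len y (stride_edges n 1) \<le> 84 * real n" using stride'(1) by simp
  have "tree_len y (stride2_graph n) \<le> tree_len y (stride_edges n 2) + tree_len y {(0,5)}"
    unfolding stride2_graph_def by (rule tree_len_Un_le) (simp_all add: fin)
  also have "tree_len y {(0,5)} = dist (y 0) (y 5)"
    by (simp add: tree_len_def)
  finally show "tree_len y (stride2_graph n) \<le> 84 * real n"
    using stride'(2) pair'(1) assms(1) by linarith
  have "tree_len y (stride3_graph n) \<le> tree_len y (stride_edges n 3) + tree_len y {(0,4), (1,5)}"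
    unfolding stride3_graph_def by (rule tree_len_Un_le) (simp_all add: fin)
  also have "tree_len y {(0,4), (1,5)} = dist (y 0) (y 4) + dist (y 1) (y 5)"
    by (simp add: tree_len_def)
  finally show "tree_len y (stride3_graph n) \<le> 84 * real n"
    using stride'(3) pair'(2,3) assms(1) by linarith
qed

lemma ex_three_disjoint_short_spanning_trees:
  assumes "in_square n x" "6 \<le> n"
  obtains S1 S2 S3 where "spanning_tree n S1" "spanning_tree n S2" "spanning_tree n S3"
    "S1 \<inter> S2 = {}" "S1 \<inter> S3 = {}" "S2 \<inter> S3 = {}"
    "tree_len x S1 \<le> 84 * real n" "tree_len x S2 \<le> 84 * real n" "tree_len x S3 \<le> 84 * real n"
proof -
  have n: "0 < n" using assms(2) by simp
  obtain \<sigma> where \<sigma>: "bij_betw \<sigma> {..<n} {..<n}"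
    and stride: "\<And>d. d \<le> n \<Longrightarrow> tree_len (x \<circ> \<sigma>) (stride_edges n d) \<le> (6 * real d + 1) * real n"
    and pair: "\<And>a b. a < n \<Longrightarrow> b < n \<Longrightarrow> dist (x (\<sigma> a)) (x (\<sigma> b)) \<le> 6 * real n + 1"
    by (rule ex_row_key_sorted_relabelling[OF assms(1) n]) (rule that)
  let ?y = "x \<circ> \<sigma>"
  have "\<And>a b. a < n \<Longrightarrow> b < n \<Longrightarrow> dist (?y a) (?y b) \<le> 6 * real n + 1" using pair by simp
  note len = tree_len_stride_graphs_le[OF assms(2) stride this]
  note sub = stride_graphs_subset_cg_edges[OF assms(2)]
  note conn = graph_connected_stride_edges_1 graph_connected_stride_graphs[OF assms(2)]
  obtain S1 where S1: "S1 \<subseteq> relabel_edge \<sigma> ` stride_edges n 1" "spanning_tree n S1"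
      "tree_len x S1 \<le> tree_len ?y (stride_edges n 1)"
    by (rule ex_spanning_tree_relabel[OF \<sigma> sub(1) conn(1)])
  obtain S2 where S2: "S2 \<subseteq> relabel_edge \<sigma> ` stride2_graph n" "spanning_tree n S2"
      "tree_len x S2 \<le> tree_len ?y (stride2_graph n)"
    by (rule ex_spanning_tree_relabel[OF \<sigma> sub(2) conn(2)])
  obtain S3 where S3: "S3 \<subseteq> relabel_edge \<sigma> ` stride3_graph n" "spanning_tree n S3"
      "tree_len x S3 \<le> tree_len ?y (stride3_graph n)"
    by (rule ex_spanning_tree_relabel[OF \<sigma> sub(3) conn(3)])
  have disj: "relabel_edge \<sigma> ` A \<inter> relabel_edge \<sigma> ` B = {}"
    if "A \<subseteq> cg_edges n" "B \<subseteq> cg_edges n" "A \<inter> B = {}" for A B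
    using inj_on_image_Int[OF inj_on_relabel_edge[OF \<sigma>] that(1,2)] that(3) by simp
  show ?thesis
  proof (rule that[OF S1(2) S2(2) S3(2)])
    show "S1 \<inter> S2 = {}" using disj[OF sub(1,2) stride_graphs_disjoint(1)] S1(1) S2(1) by blast
    show "S1 \<inter> S3 = {}" using disj[OF sub(1,3) stride_graphs_disjoint(2)] S1(1) S3(1) by blast
    show "S2 \<inter> S3 = {}" using disj[OF sub(2,3) stride_graphs_disjoint(3)] S2(1) S3(1) by blast
  qed (use S1(3) S2(3) S3(3) len in linarith)+
qed

lemma card_diff_spanning_trees_ge:
  assumes S: "spanning_tree n S1" "spanning_tree n S2" "spanning_tree n S3"
    and T: "spanning_tree n T"
    and disj: "S1 \<inter> S2 = {}" "S1 \<inter> S3 = {}" "S2 \<inter> S3 = {}"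
  shows "2 * (n - 1) \<le> card (S1 - T) + card (S2 - T) + card (S3 - T)"
proof -
  have "finite T" using T finite_cg_edges finite_subset unfolding spanning_tree_def by blast
  have "card (S1 \<inter> T) + card (S2 \<inter> T) + card (S3 \<inter> T) = card ((S1 \<inter> T) \<union> (S2 \<inter> T) \<union> (S3 \<inter> T))"
    using \<open>finite T\<close> disj by (subst card_Un_disjoint; auto)+
  also have "\<dots> \<le> card T" using \<open>finite T\<close> by (intro card_mono) auto
  finally have "card (S1 \<inter> T) + card (S2 \<inter> T) + card (S3 \<inter> T) \<le> n - 1"
    using spanning_tree_card[OF T] by simp
  moreover have split: "card (Si \<inter> T) + card (Si - T) = n - 1" if "spanning_tree n Si" for Si
    using card_Int_Diff[of Si T] spanning_tree_card[OF that] that finite_cg_edges finite_subset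
    unfolding spanning_tree_def by metis
  ultimately show ?thesis using split[OF S(1)] split[OF S(2)] split[OF S(3)] by linarith
qed

lemma ex_short_spanning_tree_far_from:
  assumes "in_square n x" "6 \<le> n" "spanning_tree n T"
  shows "\<exists>T''. spanning_tree n T'' \<and> tree_len x T'' \<le> 84 * real n \<and>
    1/2 \<le> real (card (T'' - T)) / real n"
proof -
  obtain S1 S2 S3 where S: "spanning_tree n S1" "spanning_tree n S2" "spanning_tree n S3"
    and disj: "S1 \<inter> S2 = {}" "S1 \<inter> S3 = {}" "S2 \<inter> S3 = {}"
    and len: "tree_len x S1 \<le> 84 * real n" "tree_len x S2 \<le> 84 * real n"
      "tree_len x S3 \<le> 84 * real n"
    by (rule ex_three_disjoint_short_spanning_trees[OF assms(1,2)]) (rule that)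
  have "\<exists>S\<in>{S1, S2, S3}. n \<le> 2 * card (S - T)"
  proof (rule ccontr)
    assume "\<not> ?thesis"
    then have "2 * card (S1 - T) < n" "2 * card (S2 - T) < n" "2 * card (S3 - T) < n" by auto
    then show False using card_diff_spanning_trees_ge[OF S assms(3) disj] assms(2) by linarith
  qed
  then obtain S where "spanning_tree n S" "tree_len x S \<le> 84 * real n" "n \<le> 2 * card (S - T)"
    using S len by blast
  moreover from this(3) have "1/2 \<le> real (card (S - T)) / real n"
    using assms(2) by (simp add: field_simps)
  ultimately show ?thesis by blast
qed

lemma AE_in_square:
  assumes "0 < n"
  shows "AE x in unif_points n. in_square n x"
proof -
  define C where "C = cbox (0::real^2) (\<chi> k. sqrt (real n))"
  have C: "C \<in> sets lborel" unfolding C_def by simp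
  have "0 \<in> C" unfolding C_def by (simp add: mem_box_cart)
  then have "C \<noteq> {}" by blast
  then have "measure lborel C = real n"
    unfolding C_def by (simp add: content_cbox_cart UNIV_2)
  moreover have "emeasure lborel C \<noteq> \<top>"
    unfolding C_def using emeasure_lborel_cbox_finite by (simp add: less_top)
  ultimately have "emeasure lborel C = ennreal (real n)"
    using emeasure_eq_ennreal_measure by metis
  then have "prob_space (uniform_measure lborel C)"
    using assms by (intro prob_space_uniform_measure) auto
  then have "AE x in PiM {0..<n} (\<lambda>_. uniform_measure lborel C). x i \<in> C" if "i \<in> {0..<n}" for i
    using that C by (intro AE_PiM_component[where P = "\<lambda>y. y \<in> C"] AE_uniform_measureI) auto
  then have "AE x in unif_points n. \<forall>i\<in>{0..<n}. x i \<in> C"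
    unfolding unif_points_def C_def[symmetric] by (intro eventually_ball_finite) auto
  then show ?thesis
    by (rule eventually_mono) (auto simp: in_square_def C_def mem_box_cart)
qed

theorem mainTheorem3:
  shows "\<exists>c1::real.
    (\<forall>n x T. in_square n x \<and> is_MST n x T \<longrightarrow> tree_len x T \<le> c1 * real n) \<and>
    (\<exists>N. \<forall>n\<ge>N. AE x in unif_points n. \<forall>T. is_MST n x T \<longrightarrow>
        (\<exists>T''. spanning_tree n T'' \<and> tree_len x T'' \<le> 12 * c1 * real n \<and>
               real (card (T'' - T)) / real n \<ge> 1/2))"
proof (rule exI[of _ "7::real"], rule conjI)
  show "\<forall>n x T. in_square n x \<and> is_MST n x T \<longrightarrow> tree_len x T \<le> 7 * real n"
    using is_MST_tree_len_le by blast
  show "\<exists>N. \<forall>n\<ge>N. AE x in unif_points n. \<forall>T. is_MST n x T \<longrightarrow>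
      (\<exists>T''. spanning_tree n T'' \<and> tree_len x T'' \<le> 12 * 7 * real n \<and>
             real (card (T'' - T)) / real n \<ge> 1/2)"
  proof (intro exI[of _ 6] allI impI)
    fix n :: nat assume "6 \<le> n"
    then have "AE x in unif_points n. in_square n x" by (intro AE_in_square) simp
    then show "AE x in unif_points n. \<forall>T. is_MST n x T \<longrightarrow>
        (\<exists>T''. spanning_tree n T'' \<and> tree_len x T'' \<le> 12 * 7 * real n \<and>
               real (card (T'' - T)) / real n \<ge> 1/2)"
      by (rule eventually_mono)
        (use ex_short_spanning_tree_far_from \<open>6 \<le> n\<close> in \<open>auto simp: is_MST_def\<close>)
  qed
qed

end
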